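(* Let $p\ge 1$, $\alpha\in[0,1]$, $0<\varepsilon\le 1$ and $g\in\mathbb{R}^p$ with $g\neq 0$. Let $m$ be an index with $|g_m|=\max_d|g_d|$, let $I_{12}$ be the $p\times p$ diagonal matrix with $(I_{12})_{dd}=1$ if $|g_d|\ge \alpha|g_m|$ and $0$ otherwise, and let $p_1:=\sum_d (I_{12})_{dd}$ (so $1\le p_1\le p$). Define $$\Delta x_{12,\varepsilon}:=-I_{12}g\left(\frac{\alpha\varepsilon}{\|I_{12}g\|_1}+\frac{(1-\alpha)\sqrt{\varepsilon}}{\|I_{12}g\|_2}\right)$$ and $h_\alpha(v):=\alpha\|v\|_1+(1-\alpha)\|v\|_2^2$. Then $$0.61\,\varepsilon<\varepsilon\left(1-\alpha(1-\alpha)(2-\alpha)\left(1-\frac{\varepsilon}{p_1}\right)\right)\le h_\alpha(\Delta x_{12,\varepsilon})\le \varepsilon\left(1+\alpha(1-\alpha)\left(\sqrt{\frac{p_1}{\varepsilon}}-1\right)\right)\le \varepsilon\left(1+\frac{\sqrt{p_1/\varepsilon}-1}{4}\right).$$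
   Context: $\Delta x_{12,\varepsilon}$ is the elastic gradient descent update direction in the general stagewise framework with step size $\varepsilon$. *)

theory Defs
  imports "HOL-Analysis.Analysis"
begin

definition l1norm :: "real ^ 'n \<Rightarrow> real" where
  "l1norm v = (\<Sum>d\<in>UNIV. \<bar>v $ d\<bar>)"

definition l2norm :: "real ^ 'n \<Rightarrow> real" where
  "l2norm v = sqrt (\<Sum>d\<in>UNIV. (v $ d)^2)"

definition I12 :: "real \<Rightarrow> real ^ 'n \<Rightarrow> 'n \<Rightarrow> real ^ 'n ^ 'n" where
  "I12 \<alpha> g m = (\<chi> i j. if i = j \<and> \<bar>g $ i\<bar> \<ge> \<alpha> * \<bar>g $ m\<bar> then 1 else 0)"

definition p1 :: "real \<Rightarrow> real ^ 'n \<Rightarrow> 'n \<Rightarrow> real" where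
  "p1 \<alpha> g m = (\<Sum>d\<in>UNIV. I12 \<alpha> g m $ d $ d)"

definition delta_x12 :: "real \<Rightarrow> real \<Rightarrow> real ^ 'n \<Rightarrow> 'n \<Rightarrow> real ^ 'n" where
  "delta_x12 \<alpha> \<epsilon> g m =
     - ((\<alpha> * \<epsilon> / l1norm (I12 \<alpha> g m *v g)
         + (1 - \<alpha>) * sqrt \<epsilon> / l2norm (I12 \<alpha> g m *v g)) *\<^sub>R (I12 \<alpha> g m *v g))"

definition h_alpha :: "real \<Rightarrow> real ^ 'n \<Rightarrow> real" where
  "h_alpha \<alpha> v = \<alpha> * l1norm v + (1 - \<alpha>) * (l2norm v)^2"

end

theory Submission
  imports Defs
begin

text \<open>Write \<open>u = I\<^sub>1\<^sub>2 g\<close>, \<open>L\<^sub>1 = \<parallel>u\<parallel>\<^sub>1\<close>, \<open>L\<^sub>2 = \<parallel>u\<parallel>\<^sub>2\<close> and \<open>y = \<surd>\<epsilon> L\<^sub>2 / L\<^sub>1\<close>.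
  The step is a negative multiple of \<open>u\<close>, and a direct computation gives
  \<open>h\<^sub>\<alpha>(\<Delta>x\<^sub>1\<^sub>2\<^sub>,\<^sub>\<epsilon>) = \<epsilon> (\<alpha>\<^sup>2 + \<alpha>(1-\<alpha>)/y + (1-\<alpha>)(\<alpha>y + 1 - \<alpha>)\<^sup>2)\<close>.
  Since \<open>L\<^sub>2 \<le> L\<^sub>1\<close> and, by Cauchy-Schwarz on the \<open>p\<^sub>1\<close> selected coordinates,
  \<open>L\<^sub>1 \<le> \<surd>p\<^sub>1 L\<^sub>2\<close>, we have \<open>\<surd>(\<epsilon>/p\<^sub>1) \<le> y \<le> 1\<close>, and on this interval the bracket
  lies between \<open>1 - \<alpha>(1-\<alpha>)(2-\<alpha>)(1 - \<epsilon>/p\<^sub>1)\<close> and \<open>1 + \<alpha>(1-\<alpha>)(\<surd>(p\<^sub>1/\<epsilon>) - 1)\<close>.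
  The outer bounds follow from \<open>\<alpha>(1-\<alpha>)(2-\<alpha>) \<le> 2/(3\<surd>3) < 0.39\<close> and
  \<open>\<alpha>(1-\<alpha>) \<le> 1/4\<close>.\<close>

lemma cubic_bound_unit_interval:
  fixes a :: real
  assumes "0 \<le> a" "a \<le> 1"
  shows "a * (1 - a) * (2 - a) < 39/100"
proof (cases "a \<le> 9/10")
  case True
  \<comment> \<open>the maximum is attained at \<open>1 - 1/\<surd>3 \<approx> 0.42\<close>; expand around that point\<close>
  have "39/100 - a * (1 - a) * (2 - a) = (a - 21/50)^2 * (54/25 - a) + 1122/125000 - 23/2500 * a"
    by (simp add: field_simps power2_eq_square)
  moreover have "(a - 21/50)^2 * (54/25 - a) \<ge> 0"
    using assms by simp
  ultimately show ?thesis
    using True by linarith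
next
  case False
  have "a * (2 - a) \<le> 1"
    using zero_le_power2[of "a - 1"] by (simp add: algebra_simps power2_eq_square)
  then have "a * (2 - a) * (1 - a) \<le> 1 - a"
    using assms mult_right_mono by fastforce
  then show ?thesis
    using False by (simp add: algebra_simps)
qed

lemma mult_one_minus_le_quarter:
  fixes a :: real
  shows "a * (1 - a) \<le> 1/4"
  using zero_le_power2[of "a - 1/2"] by (simp add: algebra_simps power2_eq_square)

lemma elastic_lower_bound_gt:
  fixes a e P :: real
  assumes "0 \<le> a" "a \<le> 1" "0 < e" "e \<le> P"
  shows "61/100 * e < e * (1 - a * (1 - a) * (2 - a) * (1 - e / P))"
proof -
  have "0 \<le> 1 - e / P" "1 - e / P \<le> 1"
    using assms(3,4) by (simp_all add: field_simps)
  then have "a * (1 - a) * (2 - a) * (1 - e / P) \<le> a * (1 - a) * (2 - a)"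
    using assms(1,2) by (intro mult_left_le) auto
  with cubic_bound_unit_interval[OF assms(1,2)]
  have "a * (1 - a) * (2 - a) * (1 - e / P) < 39/100" by linarith
  then show ?thesis using assms(3) by simp
qed

lemma elastic_upper_bound_le:
  fixes a e P :: real
  assumes "0 < e" "e \<le> P"
  shows "e * (1 + a * (1 - a) * (sqrt (P / e) - 1)) \<le> e * (1 + (sqrt (P / e) - 1) / 4)"
proof -
  have "0 \<le> sqrt (P / e) - 1" using assms by simp
  from mult_right_mono[OF mult_one_minus_le_quarter this]
  show ?thesis using assms(1) by simp
qed

lemma elastic_profile_bounds:
  fixes a y y0 :: real
  assumes a: "0 \<le> a" "a \<le> 1" and y: "0 < y0" "y0 \<le> y" "y \<le> 1"
  shows "1 - a * (1 - a) * (2 - a) * (1 - y0^2)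
           \<le> a^2 + a * (1 - a) / y + (1 - a) * (a * y + 1 - a)^2"
    and "a^2 + a * (1 - a) / y + (1 - a) * (a * y + 1 - a)^2
           \<le> 1 + a * (1 - a) * (1 / y0 - 1)"
proof -
  have "y > 0" using y by linarith
  then have profile: "a^2 + a * (1 - a) / y + (1 - a) * (a * y + 1 - a)^2
      = 1 + a * (1 - a) * ((1 / y - 1) + (a * y^2 + 2 * (1 - a) * y - (2 - a)))"
    by (simp add: field_simps power2_eq_square)
  have k: "a * (1 - a) \<ge> 0" using a by simp
  have y_sq: "y^2 \<le> y" "y0^2 \<le> y^2"
    using y by (simp_all add: power2_eq_square mult_le_cancel_left1 mult_mono)
  have "(2 - a) * y0^2 \<le> a * y^2 + 2 * (1 - a) * y"
  proof -
    have "(1 - a) * y^2 \<le> (1 - a) * y" "(2 - a) * y0^2 \<le> (2 - a) * y^2"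
      using a y_sq by (simp_all add: mult_left_mono)
    then show ?thesis by (simp add: algebra_simps)
  qed
  moreover have "1 / y - 1 \<ge> 0" using y by (simp add: field_simps)
  ultimately have "- (2 - a) * (1 - y0^2) \<le> (1 / y - 1) + (a * y^2 + 2 * (1 - a) * y - (2 - a))"
    by (simp add: algebra_simps)
  from mult_left_mono[OF this k]
  show "1 - a * (1 - a) * (2 - a) * (1 - y0^2)
          \<le> a^2 + a * (1 - a) / y + (1 - a) * (a * y + 1 - a)^2"
    unfolding profile by (simp add: algebra_simps)
  have "a * y^2 + 2 * (1 - a) * y \<le> 2 - a"
  proof -
    have "a * y^2 \<le> a" "(1 - a) * y \<le> 1 - a"
      using a y y_sq by (simp_all add: mult_left_le)
    then show ?thesis by (simp add: algebra_simps)
  qed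
  moreover have "1 / y \<le> 1 / y0" using y by (simp add: frac_le)
  ultimately have "(1 / y - 1) + (a * y^2 + 2 * (1 - a) * y - (2 - a)) \<le> 1 / y0 - 1"
    by simp
  from mult_left_mono[OF this k]
  show "a^2 + a * (1 - a) / y + (1 - a) * (a * y + 1 - a)^2 \<le> 1 + a * (1 - a) * (1 / y0 - 1)"
    unfolding profile by simp
qed

lemma l2norm_eq_norm: "l2norm v = norm v"
  unfolding l2norm_def norm_vec_def L2_set_def by simp

lemma l2norm_le_l1norm: "l2norm v \<le> l1norm v"
  unfolding l2norm_eq_norm l1norm_def by (rule norm_le_l1_cart)

lemma l1norm_scaleR: "l1norm (c *\<^sub>R v) = \<bar>c\<bar> * l1norm v"
  unfolding l1norm_def by (simp add: abs_mult sum_distrib_left)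

lemma l1norm_squared_le_card_l2norm_squared:
  fixes v :: "real ^ 'n"
  assumes "\<And>d. d \<notin> S \<Longrightarrow> v $ d = 0"
  shows "l1norm v ^ 2 \<le> card S * l2norm v ^ 2"
proof -
  have "l1norm v = (\<Sum>d\<in>S. \<bar>v $ d\<bar>)" "(\<Sum>d\<in>UNIV. (v $ d)^2) = (\<Sum>d\<in>S. (v $ d)^2)"
    unfolding l1norm_def using assms by (auto intro: sum.mono_neutral_right)
  then show ?thesis
    using sum_squared_le_sum_of_squares[of "\<lambda>d. \<bar>v $ d\<bar>" S]
    unfolding l2norm_def by (simp add: sum_nonneg mult.commute)
qed

lemma h_alpha_uminus_scaleR:
  "h_alpha a (- (c *\<^sub>R v)) = a * \<bar>c\<bar> * l1norm v + (1 - a) * c^2 * l2norm v ^ 2"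
  unfolding h_alpha_def l1norm_scaleR[symmetric] l2norm_eq_norm
  by (simp add: l1norm_def abs_mult sum_distrib_left power_mult_distrib mult.assoc)

lemma h_alpha_elastic_step_bounds:
  fixes u :: "real ^ 'n" and a e P :: real
  assumes a: "0 \<le> a" "a \<le> 1" and e: "0 < e" "e \<le> 1" and "u \<noteq> 0"
    and P: "l1norm u ^ 2 \<le> P * l2norm u ^ 2"
  defines "\<Delta> \<equiv> - ((a * e / l1norm u + (1 - a) * sqrt e / l2norm u) *\<^sub>R u)"
  shows "e * (1 - a * (1 - a) * (2 - a) * (1 - e / P)) \<le> h_alpha a \<Delta>"
    and "h_alpha a \<Delta> \<le> e * (1 + a * (1 - a) * (sqrt (P / e) - 1))"
proof -
  define L1 L2 where "L1 = l1norm u" and "L2 = l2norm u"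
  have L2: "0 < L2" "L2 \<le> L1"
    using \<open>u \<noteq> 0\<close> l2norm_le_l1norm unfolding L1_def L2_def l2norm_eq_norm by auto
  have "0 < L1 ^ 2" using L2 by simp
  then have "0 < P * L2 ^ 2" using P unfolding L1_def L2_def by linarith
  then have "0 < P" using L2 by (simp add: zero_less_mult_iff)
  have "L1 = sqrt (L1 ^ 2)" using L2 by simp
  also have "\<dots> \<le> sqrt (P * L2 ^ 2)" using P unfolding L1_def L2_def by (rule real_sqrt_le_mono)
  also have "\<dots> = sqrt P * L2" using L2 by (simp add: real_sqrt_mult)
  finally have "L1 \<le> sqrt P * L2" .
  define y where "y = sqrt e * L2 / L1"
  define y0 where "y0 = sqrt (e / P)"
  have y_range: "0 < y0" "y0 \<le> y" "y \<le> 1"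
  proof -
    show "0 < y0" unfolding y0_def using e \<open>0 < P\<close> by simp
    show "y0 \<le> y"
      using \<open>L1 \<le> sqrt P * L2\<close> L2 e \<open>0 < P\<close>
      by (simp add: y_def y0_def real_sqrt_divide field_simps)
    have "sqrt e * L2 \<le> L2" using L2 e by (simp add: mult_left_le_one_le)
    then have "sqrt e * L2 \<le> L1" using L2 by linarith
    then show "y \<le> 1" using L2 by (simp add: y_def)
  qed
  have y0: "y0 ^ 2 = e / P" "1 / y0 = sqrt (P / e)"
    using e \<open>0 < P\<close> by (simp_all add: y0_def real_sqrt_divide power_divide)
  define c where "c = a * e / L1 + (1 - a) * sqrt e / L2"
  have "0 \<le> c" using a e L2 by (simp add: c_def)
  then have "h_alpha a \<Delta> = a * c * L1 + (1 - a) * c^2 * L2^2"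
    by (simp add: \<Delta>_def c_def L1_def L2_def h_alpha_uminus_scaleR)
  also have "\<dots> = e * (a^2 + a * (1 - a) / y + (1 - a) * (a * y + 1 - a)^2)"
  proof -
    obtain s where "0 < s" "e = s^2"
      using e by (metis real_sqrt_gt_0_iff real_sqrt_pow2 less_eq_real_def)
    then show ?thesis
      using L2 by (simp add: c_def y_def field_simps power2_eq_square)
  qed
  finally show "e * (1 - a * (1 - a) * (2 - a) * (1 - e / P)) \<le> h_alpha a \<Delta>"
    and "h_alpha a \<Delta> \<le> e * (1 + a * (1 - a) * (sqrt (P / e) - 1))"
    using elastic_profile_bounds[OF a y_range, unfolded y0] e by simp_all
qed

lemma I12_mult_vec:
  "(I12 \<alpha> g m *v g) $ d = (if \<alpha> * \<bar>g $ m\<bar> \<le> \<bar>g $ d\<bar> then g $ d else 0)"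
  unfolding I12_def matrix_vector_mult_def
  by (auto simp: if_distrib[of "\<lambda>x. x * _"] cong: if_cong)

lemma p1_eq_card: "p1 \<alpha> g m = card {d. \<alpha> * \<bar>g $ m\<bar> \<le> \<bar>g $ d\<bar>}"
  unfolding p1_def I12_def by (simp add: sum.If_cases)

lemma nth_Max_abs_nonzero:
  fixes g :: "real ^ 'n"
  assumes "g \<noteq> 0" and "\<bar>g $ m\<bar> = Max {\<bar>g $ d\<bar> | d. True}"
  shows "g $ m \<noteq> 0"
proof -
  obtain d where "g $ d \<noteq> 0" using assms(1) by (auto simp: vec_eq_iff)
  moreover have "\<bar>g $ d\<bar> \<le> \<bar>g $ m\<bar>"
    unfolding assms(2) by (rule Max_ge) (auto simp: full_SetCompr_eq)
  ultimately show ?thesis by auto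
qed

theorem theorem5:
  fixes g :: "real ^ 'n" and \<alpha> \<epsilon> :: real and m :: 'n
  assumes "0 \<le> \<alpha>" "\<alpha> \<le> 1" "0 < \<epsilon>" "\<epsilon> \<le> 1" "g \<noteq> 0"
    and "\<bar>g $ m\<bar> = Max {\<bar>g $ d\<bar> | d. True}"
  shows "0.61 * \<epsilon> < \<epsilon> * (1 - \<alpha> * (1 - \<alpha>) * (2 - \<alpha>) * (1 - \<epsilon> / p1 \<alpha> g m))
    \<and> \<epsilon> * (1 - \<alpha> * (1 - \<alpha>) * (2 - \<alpha>) * (1 - \<epsilon> / p1 \<alpha> g m))
           \<le> h_alpha \<alpha> (delta_x12 \<alpha> \<epsilon> g m)
    \<and> h_alpha \<alpha> (delta_x12 \<alpha> \<epsilon> g m)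
           \<le> \<epsilon> * (1 + \<alpha> * (1 - \<alpha>) * (sqrt (p1 \<alpha> g m / \<epsilon>) - 1))
    \<and> \<epsilon> * (1 + \<alpha> * (1 - \<alpha>) * (sqrt (p1 \<alpha> g m / \<epsilon>) - 1))
           \<le> \<epsilon> * (1 + (sqrt (p1 \<alpha> g m / \<epsilon>) - 1) / 4)"
proof -
  define S where "S = {d. \<alpha> * \<bar>g $ m\<bar> \<le> \<bar>g $ d\<bar>}"
  define u where "u = I12 \<alpha> g m *v g"
  have "g $ m \<noteq> 0" using nth_Max_abs_nonzero assms(5,6) .
  then have "u $ m \<noteq> 0" "m \<in> S"
    using assms(2) by (simp_all add: u_def S_def I12_mult_vec mult_left_le_one_le)
  then have "u \<noteq> 0" "1 \<le> p1 \<alpha> g m"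
    by (auto simp: p1_eq_card S_def[symmetric] Suc_le_eq card_gt_0_iff)
  have "l1norm u ^ 2 \<le> p1 \<alpha> g m * l2norm u ^ 2"
    unfolding p1_eq_card
    by (rule l1norm_squared_le_card_l2norm_squared) (simp add: u_def I12_mult_vec)
  moreover have "delta_x12 \<alpha> \<epsilon> g m
      = - ((\<alpha> * \<epsilon> / l1norm u + (1 - \<alpha>) * sqrt \<epsilon> / l2norm u) *\<^sub>R u)"
    unfolding delta_x12_def u_def ..
  ultimately have
      "\<epsilon> * (1 - \<alpha> * (1 - \<alpha>) * (2 - \<alpha>) * (1 - \<epsilon> / p1 \<alpha> g m)) \<le> h_alpha \<alpha> (delta_x12 \<alpha> \<epsilon> g m)"
      "h_alpha \<alpha> (delta_x12 \<alpha> \<epsilon> g m) \<le> \<epsilon> * (1 + \<alpha> * (1 - \<alpha>) * (sqrt (p1 \<alpha> g m / \<epsilon>) - 1))"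
    using h_alpha_elastic_step_bounds[OF assms(1-4) \<open>u \<noteq> 0\<close>] by simp_all
  moreover have "\<epsilon> \<le> p1 \<alpha> g m" using assms(4) \<open>1 \<le> p1 \<alpha> g m\<close> by linarith
  ultimately show ?thesis
    using elastic_lower_bound_gt elastic_upper_bound_le assms(1-3) by simp
qed

end
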